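(* Let $n>1$, $Q=\{1,2,\dots,n\}$, and for $k=1,2,\dots,n$ let $$B_{n,k}=\{t:Q\to Q \mid it>i \text{ for all } 1\le i<k,\ \text{and } it=k \text{ for all } i\ge k\}.$$ Let $B_n=\bigcup_{k=1}^n B_{n,k}$. Then $B_n$ is a semigroup under composition, every element of $B_n$ is non-permutational, $|B_n|=\lfloor e\cdot (n-1)!\rfloor$, and $B_n$ is maximal in the following sense: for every non-permutational transformation $t$ of $Q$ with $t\notin B_n$, the semigroup generated by $B_n\cup\{t\}$ contains a permutational transformation.
   Context: A transformation of $Q$ is a map $t:Q\to Q$; $it$ denotes the image of $i$, and composition is written left to right: $i(t_1t_2)=(it_1)t_2$. A transformation $t$ of $Q$ is permutational if there exists $X\subseteq Q$ with $|X|\ge 2$ such that $Xt\subseteq X$ and the restriction of $t$ to $X$ is a bijection of $X$ onto itself; otherwise $t$ is non-permutational. Here $e$ is Euler's number. *)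

theory Defs
  imports Complex_Main "HOL-Library.FuncSet"
begin

definition Qset :: "nat \<Rightarrow> nat set" where
  "Qset n = {1..n}"

definition transf :: "nat \<Rightarrow> (nat \<Rightarrow> nat) set" where
  "transf n = Qset n \<rightarrow>\<^sub>E Qset n"

text \<open>Left-to-right composition: i (s t) = (i s) t.\<close>
definition tcomp :: "nat \<Rightarrow> (nat \<Rightarrow> nat) \<Rightarrow> (nat \<Rightarrow> nat) \<Rightarrow> (nat \<Rightarrow> nat)" where
  "tcomp n s t = compose (Qset n) t s"

definition permutational :: "nat \<Rightarrow> (nat \<Rightarrow> nat) \<Rightarrow> bool" where
  "permutational n t \<longleftrightarrow>
     (\<exists>X. X \<subseteq> Qset n \<and> card X \<ge> 2 \<and> t ` X \<subseteq> X \<and> bij_betw t X X)"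

definition Bnk :: "nat \<Rightarrow> nat \<Rightarrow> (nat \<Rightarrow> nat) set" where
  "Bnk n k = {t \<in> transf n. (\<forall>i. 1 \<le> i \<and> i < k \<longrightarrow> t i > i) \<and>
                              (\<forall>i\<in>Qset n. i \<ge> k \<longrightarrow> t i = k)}"

definition Bn :: "nat \<Rightarrow> (nat \<Rightarrow> nat) set" where
  "Bn n = (\<Union>k\<in>{1..n}. Bnk n k)"

inductive_set gen_semigroup :: "nat \<Rightarrow> (nat \<Rightarrow> nat) set \<Rightarrow> (nat \<Rightarrow> nat) set"
  for n S where
  base: "t \<in> S \<Longrightarrow> t \<in> gen_semigroup n S"
| comp: "s \<in> gen_semigroup n S \<Longrightarrow> t \<in> gen_semigroup n S \<Longrightarrow> tcomp n s t \<in> gen_semigroup n S"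

end

theory Submission
  imports Defs
begin

text \<open>If X is invariant and t is bijective on X, the preimage of
  min X cannot lie below k, so min X = k and t is constant on X, forcing |X| = 1. For
  s in B(n,k) and t in B(n,l) the product lies in B(n, t k). An element of B(n,k) is a free
  choice of t i in {i+1..n} for i < k, so |B(n,k)| = (n-1)!/(n-k)!; summing over k gives
  m! times the m-th partial sum of the series for e (m = n - 1), which misses m! e by less
  than 1.

  For maximality, every invariant set of a non-permutational t contains a fixed point, and
  two fixed points would form a permutational pair, so t has a unique fixed point f and no
  final segment above f is invariant. Since t is not in B(n,f), this produces points where
  t drops, and an element b of B(n) sending such t-images back to their preimages makes the
  product of t and b fix two points.\<close>

lemma tcomp_apply: "i \<in> Qset n \<Longrightarrow> tcomp n s t i = t (s i)"
  by (simp add: tcomp_def compose_def)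

lemma transf_apply_in: "t \<in> transf n \<Longrightarrow> i \<in> Qset n \<Longrightarrow> t i \<in> Qset n"
  by (auto simp: transf_def)

lemma tcomp_in_transf: "s \<in> transf n \<Longrightarrow> t \<in> transf n \<Longrightarrow> tcomp n s t \<in> transf n"
  by (auto simp: transf_def tcomp_def compose_def)

lemma BnkD:
  assumes "t \<in> Bnk n k"
  shows "t \<in> transf n" and "1 \<le> i \<Longrightarrow> i < k \<Longrightarrow> i < t i"
    and "i \<in> Qset n \<Longrightarrow> k \<le> i \<Longrightarrow> t i = k"
  using assms by (auto simp: Bnk_def)

lemma Bnk_subset_Bn: "k \<in> Qset n \<Longrightarrow> Bnk n k \<subseteq> Bn n"
  by (auto simp: Bn_def Qset_def)

lemma Bnk_apply_gt:
  assumes "t \<in> Bnk n l" "i < l" "i < j" "j \<in> Qset n"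
  shows "i < t j"
  using assms BnkD(2,3)[OF assms(1), of j] by (cases "j < l") (auto simp: Qset_def)

lemma Bnk_tcomp:
  assumes s: "s \<in> Bnk n k" and t: "t \<in> Bnk n l" and k: "k \<in> Qset n"
  shows "tcomp n s t \<in> Bnk n (t k)"
proof -
  have sQ: "s i \<in> Qset n" if "i \<in> Qset n" for i
    using transf_apply_in[OF BnkD(1)[OF s] that] .
  have tk: "if k < l then k < t k else t k = l"
    using BnkD(2,3)[OF t, of k] k by (auto simp: Qset_def)
  have below: "i < t (s i)" if i: "i \<in> Qset n" "i < t k" for i
  proof (cases "i < k")
    case True
    then have "i < l" using tk i by (auto split: if_splits)
    then show ?thesis
      using Bnk_apply_gt[OF t _ _ sQ[OF i(1)]] BnkD(2)[OF s, of i] True i by (auto simp: Qset_def)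
  qed (use BnkD(3)[OF s] i in auto)
  have above: "t (s i) = t k" if i: "i \<in> Qset n" "t k \<le> i" for i
  proof (cases "i < k")
    case True
    then have "l \<le> i" "t k = l" using tk i by (auto split: if_splits)
    moreover have "i < s i" using BnkD(2)[OF s, of i] True i by (auto simp: Qset_def)
    ultimately show ?thesis using BnkD(3)[OF t sQ[OF i(1)]] by simp
  qed (use BnkD(3)[OF s] i in auto)
  show ?thesis
    unfolding Bnk_def
    using tcomp_in_transf[OF BnkD(1)[OF s] BnkD(1)[OF t]] below above
      transf_apply_in[OF BnkD(1)[OF t] k]
    by (auto simp: tcomp_apply Qset_def)
qed

lemma Bn_tcomp_closed:
  assumes "s \<in> Bn n" "t \<in> Bn n"
  shows "tcomp n s t \<in> Bn n"
proof -
  obtain k l where k: "k \<in> Qset n" "s \<in> Bnk n k" and "t \<in> Bnk n l"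
    using assms by (auto simp: Bn_def Qset_def)
  then have "tcomp n s t \<in> Bnk n (t k)" and "t k \<in> Qset n"
    using Bnk_tcomp transf_apply_in BnkD(1) by blast+
  then show ?thesis using Bnk_subset_Bn by blast
qed

lemma Bnk_not_permutational:
  assumes t: "t \<in> Bnk n k"
  shows "\<not> permutational n t"
proof
  assume "permutational n t"
  then obtain X where X: "X \<subseteq> Qset n" "2 \<le> card X" "bij_betw t X X"
    by (auto simp: permutational_def)
  have fin: "finite X" and "X \<noteq> {}"
    using X(1,2) finite_subset[of X "{1..n}"] by (auto simp: Qset_def)
  then have "Min X \<in> X" by simp
  then obtain z where z: "z \<in> X" "t z = Min X"
    using X(3) by (metis bij_betw_imp_surj_on imageE)
  have "k \<le> z"
  proof (rule ccontr)
    assume "\<not> k \<le> z"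
    then have "z < t z" using BnkD(2)[OF t, of z] z X(1) by (auto simp: Qset_def)
    then show False using z(2) Min_le[OF fin z(1)] by linarith
  qed
  then have "Min X = k" using z BnkD(3)[OF t] X(1) by auto
  then have "t ` X \<subseteq> {k}" using BnkD(3)[OF t] X(1) fin by auto
  then have "card (t ` X) \<le> 1" using card_mono[of "{k}"] by fastforce
  moreover have "card (t ` X) = card X"
    using X(3) by (simp add: bij_betw_def card_image)
  ultimately show False using X(2) by simp
qed

lemma permutational_if_two_fixpoints:
  assumes "p \<in> Qset n" "q \<in> Qset n" "p \<noteq> q" "u p = p" "u q = q"
  shows "permutational n u"
  unfolding permutational_def
  using assms by (intro exI[of _ "{p, q}"]) (auto simp: bij_betw_def inj_on_def)

lemma not_permutational_invariant_has_fixpoint: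
  assumes "\<not> permutational n t"
  shows "Y \<subseteq> Qset n \<Longrightarrow> Y \<noteq> {} \<Longrightarrow> t ` Y \<subseteq> Y \<Longrightarrow> \<exists>a\<in>Y. t a = a"
proof (induction "card Y" arbitrary: Y rule: less_induct)
  case less
  have fin: "finite Y" using less.prems(1) finite_subset by (auto simp: Qset_def)
  show ?case
  proof (cases "t ` Y = Y")
    case True
    then have "bij_betw t Y Y" using fin by (simp add: bij_betw_def eq_card_imp_inj_on)
    then have "card Y < 2" using assms less.prems(1,3) unfolding permutational_def by (meson not_le)
    moreover have "card Y \<noteq> 0" using fin less.prems(2) by simp
    ultimately obtain a where "Y = {a}" by (auto simp: card_1_singleton_iff less_2_cases_iff)
    then show ?thesis using less.prems(3) by auto
  next
    case False
    then have "t ` Y \<subset> Y" using less.prems(3) by auto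
    then have "card (t ` Y) < card Y" using fin psubset_card_mono by blast
    moreover have "t ` Y \<subseteq> Qset n" "t ` Y \<noteq> {}" "t ` (t ` Y) \<subseteq> t ` Y"
      using less.prems by auto
    ultimately obtain a where "a \<in> t ` Y" "t a = a" using less.hyps by blast
    then show ?thesis using \<open>t ` Y \<subset> Y\<close> by auto
  qed
qed

lemma permutational_generated_from_drop_below_fixed:
  assumes t: "t \<in> transf n" and k: "k \<in> Qset n" "k \<le> t k"
    and z: "z \<in> Qset n" "t z < k" "t z < z"
  shows "\<exists>s\<in>gen_semigroup n (insert t (Bn n)). permutational n s"
proof -
  define b where "b = (\<lambda>i\<in>Qset n. if i = t z then z else k)"
  have "b \<in> Bnk n k" using k z by (auto simp: b_def Bnk_def transf_def Qset_def)
  then have "b \<in> Bn n" using Bnk_subset_Bn[OF k(1)] by blast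
  then have g: "tcomp n t b \<in> gen_semigroup n (insert t (Bn n))"
    by (intro gen_semigroup.comp gen_semigroup.base) auto
  have "tcomp n t b k = k" "tcomp n t b z = z"
    using k z transf_apply_in[OF t] by (auto simp: tcomp_apply b_def)
  moreover have "z \<noteq> k" using k z by auto
  ultimately show ?thesis using permutational_if_two_fixpoints[OF z(1) k(1)] g by blast
qed

lemma permutational_generated_from_two_drops:
  assumes t: "t \<in> transf n" and x: "x \<in> Qset n" "t x < x"
    and y: "y \<in> Qset n" "t y < y" and ne: "t x \<noteq> t y"
  shows "\<exists>s\<in>gen_semigroup n (insert t (Bn n)). permutational n s"
proof -
  define b where "b = (\<lambda>i\<in>Qset n. if i = t x then x else if i = t y then y else n)"
  have tx: "t x \<in> Qset n" and ty: "t y \<in> Qset n" using t x y transf_apply_in by blast+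
  have "b \<in> Bnk n n" using x y tx ty by (auto simp: b_def Bnk_def transf_def Qset_def)
  moreover have "n \<in> Qset n" using x by (auto simp: Qset_def)
  ultimately have "b \<in> Bn n" using Bnk_subset_Bn by blast
  then have g: "tcomp n b t \<in> gen_semigroup n (insert t (Bn n))"
    by (intro gen_semigroup.comp gen_semigroup.base) auto
  have "tcomp n b t (t x) = t x" "tcomp n b t (t y) = t y"
    using tx ty ne by (auto simp: tcomp_apply b_def)
  then show ?thesis using permutational_if_two_fixpoints[OF tx ty ne] g by blast
qed

lemma not_permutational_unique_fixpoint:
  assumes t: "t \<in> transf n" and np: "\<not> permutational n t" and n: "1 \<le> n"
  obtains f where "f \<in> Qset n" "t f = f" "\<And>a. a \<in> Qset n \<Longrightarrow> t a = a \<Longrightarrow> a = f"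
proof -
  have "t ` Qset n \<subseteq> Qset n" using transf_apply_in[OF t] by blast
  moreover have "Qset n \<noteq> {}" using n by (simp add: Qset_def)
  ultimately obtain f where f: "f \<in> Qset n" "t f = f"
    using not_permutational_invariant_has_fixpoint[OF np order_refl] by blast
  have "a = f" if "a \<in> Qset n" "t a = a" for a
    using permutational_if_two_fixpoints[OF that(1) f(1) _ that(2) f(2)] np by blast
  with f that show ?thesis by blast
qed

lemma not_permutational_drop_above_fixpoint:
  assumes t: "t \<in> transf n" and np: "\<not> permutational n t"
    and fix_uniq: "\<And>a. a \<in> Qset n \<Longrightarrow> t a = a \<Longrightarrow> a = f"
    and y: "f < y" "y \<le> n"
  shows "\<exists>z\<in>{y..n}. t z < y"
proof (rule ccontr)
  assume no_drop: "\<not> ?thesis"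
  have sub: "{y..n} \<subseteq> Qset n" using y by (auto simp: Qset_def)
  have "t z \<in> {y..n}" if z: "z \<in> {y..n}" for z
  proof -
    have "\<not> t z < y" using no_drop z by blast
    then show ?thesis using transf_apply_in[OF t, of z] z sub by (auto simp: Qset_def)
  qed
  then have "t ` {y..n} \<subseteq> {y..n}" by blast
  moreover have "{y..n} \<noteq> {}" using y by simp
  ultimately obtain a where "a \<in> {y..n}" "t a = a"
    using not_permutational_invariant_has_fixpoint[OF np sub] by blast
  then show False using fix_uniq[of a] y by (auto simp: Qset_def)
qed

lemma Bn_maximal:
  assumes t: "t \<in> transf n" and np: "\<not> permutational n t" and nB: "t \<notin> Bn n" and n: "1 \<le> n"
  shows "\<exists>s\<in>gen_semigroup n (insert t (Bn n)). permutational n s"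
proof -
  obtain f where f: "f \<in> Qset n" "t f = f" and uniq: "\<And>a. a \<in> Qset n \<Longrightarrow> t a = a \<Longrightarrow> a = f"
    using not_permutational_unique_fixpoint[OF t np n] by blast
  note drop_from_fixed = permutational_generated_from_drop_below_fixed[OF t]
  have "t \<notin> Bnk n f" using nB f(1) by (auto simp: Bn_def Qset_def)
  then have "(\<exists>x. 1 \<le> x \<and> x < f \<and> t x \<le> x) \<or> (\<exists>x\<in>Qset n. f \<le> x \<and> t x \<noteq> f)"
    using t unfolding Bnk_def by (simp add: not_less)
  then show ?thesis
  proof (elim disjE exE bexE conjE)
    fix x assume "1 \<le> x" "x < f" "t x \<le> x"
    moreover from this have x: "x \<in> Qset n" using f by (auto simp: Qset_def)
    moreover from x have "t x \<noteq> x" using uniq \<open>x < f\<close> by blast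
    ultimately show ?thesis using drop_from_fixed[OF f(1) _ x] f by simp
  next
    fix x assume x: "x \<in> Qset n" "f \<le> x" "t x \<noteq> f"
    then have "f < x" "t x \<noteq> x" using f(2) uniq[OF x(1)] by (auto simp: le_less)
    have tx: "t x \<in> Qset n" using transf_apply_in[OF t x(1)] .
    consider "t x < f" | "x < t x" | "f < t x" "t x < x"
      using \<open>f < x\<close> \<open>t x \<noteq> x\<close> x(3) by linarith
    then show ?thesis
    proof cases
      case 1
      then show ?thesis using drop_from_fixed[OF f(1) _ x(1)] f(2) \<open>f < x\<close> by simp
    next
      case 2
      obtain z where "z \<in> {x..n}" "t z < x"
        using not_permutational_drop_above_fixpoint[OF t np uniq \<open>f < x\<close>] x(1) by (auto simp: Qset_def)
      then show ?thesis using drop_from_fixed[OF x(1)] 2 x(1) by (auto simp: Qset_def)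
    next
      case 3
      obtain z where "z \<in> {t x..n}" "t z < t x"
        using not_permutational_drop_above_fixpoint[OF t np uniq 3(1)] tx by (auto simp: Qset_def)
      then show ?thesis
        using permutational_generated_from_two_drops[OF t x(1) 3(2), of z] tx by (auto simp: Qset_def)
    qed
  qed
qed

lemma card_Bnk:
  assumes k: "k \<in> Qset n"
  shows "card (Bnk n k) = (\<Prod>i\<in>{1..<k}. n - i)"
proof -
  let ?P = "\<Pi>\<^sub>E i\<in>{1..<k}. {i<..n}"
  let ?extend = "\<lambda>g. \<lambda>x\<in>Qset n. if x < k then g x else k"
  have "bij_betw (\<lambda>t. restrict t {1..<k}) (Bnk n k) ?P"
  proof (rule bij_betw_byWitness[where f' = ?extend])
    show "\<forall>t\<in>Bnk n k. ?extend (restrict t {1..<k}) = t"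
      by (auto simp: Bnk_def transf_def Qset_def fun_eq_iff PiE_def extensional_def)
    show "\<forall>g\<in>?P. restrict (?extend g) {1..<k} = g"
      using k by (auto simp: Qset_def fun_eq_iff PiE_def extensional_def)
    show "(\<lambda>t. restrict t {1..<k}) ` Bnk n k \<subseteq> ?P"
      using k by (fastforce simp: Bnk_def transf_def Qset_def)
    show "?extend ` ?P \<subseteq> Bnk n k"
    proof
      fix t assume "t \<in> ?extend ` ?P"
      then obtain g where g: "g \<in> ?P" and t: "t = ?extend g" by blast
      have gi: "g i \<in> {i<..n}" if "1 \<le> i" "i < k" for i using g that by auto
      have "i < g i" "1 \<le> g i" "g i \<le> n" if "1 \<le> i" "i < k" for i
        using gi[OF that] that by auto
      then show "t \<in> Bnk n k" using k unfolding t by (auto simp: Bnk_def transf_def Qset_def)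
    qed
  qed
  then have "card (Bnk n k) = card ?P" by (rule bij_betw_same_card)
  also have "\<dots> = (\<Prod>i\<in>{1..<k}. n - i)" by (simp add: card_PiE)
  finally show ?thesis .
qed

lemma prod_diff_eq_fact_div_fact:
  assumes "1 \<le> k" "k \<le> n"
  shows "(\<Prod>i\<in>{1..<k}. n - i) = fact (n - 1) div (fact (n - k) :: nat)"
proof -
  have "fact (n - 1) div fact (n - k) = \<Prod>{n - k + 1..n - 1}"
    using assms by (intro fact_div_fact) simp
  also have "\<dots> = (\<Prod>i\<in>{1..<k}. n - i)"
    using assms by (intro prod.reindex_bij_witness[where i = "\<lambda>j. n - j" and j = "\<lambda>i. n - i"]) auto
  finally show ?thesis by simp
qed

lemma Bnk_disjoint:
  assumes "k \<in> Qset n" "k < l"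
  shows "Bnk n k \<inter> Bnk n l = {}"
  using assms BnkD(2)[of _ n l k] BnkD(3)[of _ n k k] by (force simp: Qset_def)

lemma finite_Bnk: "finite (Bnk n k)"
proof (rule finite_subset)
  show "Bnk n k \<subseteq> transf n" by (auto simp: Bnk_def)
  show "finite (transf n)" by (simp add: transf_def Qset_def finite_PiE)
qed

lemma card_Bn: "card (Bn n) = (\<Sum>j<n. fact (n - 1) div fact j)"
proof -
  have "card (Bn n) = (\<Sum>k\<in>{1..n}. card (Bnk n k))"
    unfolding Bn_def
  proof (rule card_UN_disjoint)
    show "\<forall>k\<in>{1..n}. \<forall>l\<in>{1..n}. k \<noteq> l \<longrightarrow> Bnk n k \<inter> Bnk n l = {}"
      by (metis Bnk_disjoint Int_commute Qset_def linorder_neqE_nat)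
  qed (simp_all add: finite_Bnk)
  also have "\<dots> = (\<Sum>k\<in>{1..n}. fact (n - 1) div fact (n - k))"
    by (intro sum.cong refl) (metis atLeastAtMost_iff card_Bnk Qset_def prod_diff_eq_fact_div_fact)
  also have "\<dots> = (\<Sum>j<n. fact (n - 1) div fact j)"
    by (intro sum.reindex_bij_witness[where i = "\<lambda>j. n - j" and j = "\<lambda>k. n - k"]) auto
  finally show ?thesis .
qed

lemma two_mult_pow3_mult_fact_le: "1 \<le> m \<Longrightarrow> 2 * 3 ^ j * fact m \<le> (fact (j + Suc m) :: nat)"
proof (induction j)
  case 0
  then show ?case by (simp add: fact_Suc)
next
  case (Suc j)
  have "2 * 3 ^ Suc j * fact m = 3 * (2 * 3 ^ j * (fact m :: nat))" by simp
  also have "\<dots> \<le> 3 * fact (j + Suc m)" using Suc by simp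
  also have "\<dots> \<le> Suc (j + Suc m) * fact (j + Suc m)" using Suc.prems by (intro mult_right_mono) auto
  finally show ?case by simp
qed

text \<open>With S the m-th partial sum of the exponential series, m! S is an integer and the
  tail m! (e - S) lies in (0, 3/4] by comparison with a geometric series.\<close>

lemma floor_exp1_mult_fact:
  assumes m: "1 \<le> m"
  shows "\<lfloor>exp 1 * fact m :: real\<rfloor> = int (\<Sum>j<Suc m. fact m div fact j)"
proof -
  define S where "S = (\<Sum>j<Suc m. 1 / fact j :: real)"
  define R where "R = fact m * (exp 1 - S)"
  have "(\<lambda>j. 1 / fact j :: real) sums exp 1"
    using exp_converges[of "1::real"] by (simp add: divide_inverse)
  then have "(\<lambda>j. 1 / fact (j + Suc m) :: real) sums (exp 1 - S)"
    unfolding S_def by (rule sums_split_initial_segment)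
  then have tail: "(\<lambda>j. fact m * (1 / fact (j + Suc m)) :: real) sums R"
    unfolding R_def by (rule sums_mult)
  have bound: "fact m * (1 / fact (j + Suc m)) \<le> 1 / 2 * (1 / 3 :: real) ^ j" for j
  proof -
    have "real (2 * 3 ^ j * fact m) \<le> real (fact (j + Suc m))"
      using two_mult_pow3_mult_fact_le[OF m, of j] by (simp only: of_nat_le_iff)
    then have "2 * 3 ^ j * fact m \<le> (fact (j + Suc m) :: real)"
      by (simp only: of_nat_mult of_nat_power of_nat_fact of_nat_numeral)
    moreover have "(0 :: real) < fact (j + Suc m)" by simp
    ultimately show ?thesis by (simp add: field_simps power_divide)
  qed
  have geometric: "(\<lambda>j. 1 / 2 * (1 / 3 :: real) ^ j) sums (1 / 2 * (1 / (1 - 1 / 3)))"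
    by (intro sums_mult geometric_sums) simp
  have "R \<le> 3 / 4" using sums_le[OF bound tail geometric] by simp
  moreover have "0 < R"
    using tail suminf_pos[of "\<lambda>j. fact m * (1 / fact (j + Suc m)) :: real"] by (simp add: sums_iff)
  moreover have "fact m * S = real (\<Sum>j<Suc m. fact m div fact j)"
    unfolding S_def sum_distrib_left of_nat_sum
    by (intro sum.cong refl) (simp add: real_of_nat_div fact_dvd)
  then have "exp 1 * fact m = real (\<Sum>j<Suc m. fact m div fact j) + R"
    unfolding R_def by (simp add: algebra_simps)
  ultimately show ?thesis by (intro floor_unique) simp_all
qed

lemma of_real_nonneg_linordered:
  assumes "0 \<le> x"
  shows "0 \<le> (of_real x :: 'a::{linordered_ring,real_algebra_1})"
proof -
  have "(of_real x :: 'a) = of_real (sqrt x) * of_real (sqrt x)"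
    using assms by (simp flip: of_real_mult)
  then show ?thesis by (simp only: zero_le_square)
qed

lemma of_real_mono_linordered:
  assumes "x \<le> y"
  shows "(of_real x :: 'a::{linordered_ring,real_algebra_1}) \<le> of_real y"
proof -
  have "0 \<le> (of_real (y - x) :: 'a)" using assms by (intro of_real_nonneg_linordered) simp
  then show ?thesis by (simp only: of_real_diff diff_ge_0_iff_ge)
qed

lemma floor_of_real: "\<lfloor>of_real x :: 'a::{floor_ceiling,real_algebra_1}\<rfloor> = \<lfloor>x\<rfloor>"
proof (rule floor_unique)
  have "(of_real (of_int \<lfloor>x\<rfloor>) :: 'a) \<le> of_real x"
    by (rule of_real_mono_linordered) (rule of_int_floor_le)
  then show "of_int \<lfloor>x\<rfloor> \<le> (of_real x :: 'a)" by (simp only: of_real_of_int_eq)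
  have "x < of_int \<lfloor>x\<rfloor> + 1" by (rule real_of_int_floor_add_one_gt)
  then have "(of_real x :: 'a) \<le> of_real (of_int \<lfloor>x\<rfloor> + 1)" and "(of_real x :: 'a) \<noteq> of_real (of_int \<lfloor>x\<rfloor> + 1)"
    by (auto intro: of_real_mono_linordered simp only: of_real_eq_iff)
  then show "(of_real x :: 'a) < of_int \<lfloor>x\<rfloor> + 1"
    by (simp only: of_real_add of_real_of_int_eq of_real_1 order_less_le) simp
qed

lemma exp1_mult_fact_eq_of_real:
  "(exp 1 * fact m :: 'a::{banach,real_normed_algebra_1}) = of_real (exp 1 * fact m)"
proof -
  have "(exp 1 :: 'a) = of_real (exp 1)" using exp_of_real[of 1, where 'a = 'a] by (simp only: of_real_1)
  moreover have "(fact m :: 'a) = of_real (fact m)" by (simp only: of_real_fact)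
  ultimately show ?thesis by (simp only: of_real_mult)
qed

text \<open>Nothing in theorem4 fixes the type of exp 1 * fact (n - 1), so its floor is taken in
  an arbitrary type of sort floor_ceiling, banach and real_normed_algebra_1.\<close>

lemma floor_exp1_mult_fact_of_real_algebra:
  assumes "1 \<le> m"
  shows "\<lfloor>exp 1 * fact m :: 'a::{floor_ceiling,banach,real_normed_algebra_1}\<rfloor>
    = int (\<Sum>j<Suc m. fact m div fact j)"
  by (subst exp1_mult_fact_eq_of_real, subst floor_of_real) (rule floor_exp1_mult_fact[OF assms])

theorem theorem4:
  fixes n :: nat
  assumes "n > 1"
  shows "(\<forall>s\<in>Bn n. \<forall>t\<in>Bn n. tcomp n s t \<in> Bn n)
       \<and> (\<forall>t\<in>Bn n. \<not> permutational n t)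
       \<and> real (card (Bn n)) = of_int \<lfloor>exp 1 * fact (n - 1)\<rfloor>
       \<and> (\<forall>t\<in>transf n. \<not> permutational n t \<and> t \<notin> Bn n \<longrightarrow>
             (\<exists>s\<in>gen_semigroup n (insert t (Bn n)). permutational n s))"
proof (intro conjI)
  show "\<forall>s\<in>Bn n. \<forall>t\<in>Bn n. tcomp n s t \<in> Bn n" using Bn_tcomp_closed by blast
  show "\<forall>t\<in>Bn n. \<not> permutational n t" using Bnk_not_permutational by (auto simp: Bn_def)
  have "card (Bn n) = (\<Sum>j<Suc (n - 1). fact (n - 1) div fact j)"
    using assms by (simp add: card_Bn)
  moreover have "1 \<le> n - 1" using assms by simp
  ultimately show "real (card (Bn n)) = of_int \<lfloor>exp 1 * fact (n - 1)\<rfloor>"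
    using floor_exp1_mult_fact_of_real_algebra by (metis of_int_of_nat_eq)
  show "\<forall>t\<in>transf n. \<not> permutational n t \<and> t \<notin> Bn n \<longrightarrow>
          (\<exists>s\<in>gen_semigroup n (insert t (Bn n)). permutational n s)"
    using Bn_maximal assms by auto
qed

end
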